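(* Let $G$ be a finite simple graph with edge weight function $w$ and vertex weight function $w_1$, let $\theta$ be a real number and let $u\in V(G)$. If $u$ is $(\theta,w,w_1)$-special, then $u$ is $(\theta,w,w_1)$-positive.
   Context: An edge weight function $w$ assigns a nonzero complex number to each edge; a vertex weight function $w_1$ assigns a real number (possibly $0$) to each vertex; subgraphs carry restricted weights; $G\setminus u$ deletes $u$ and its incident edges. For $A\subseteq E(G)$, $w(A)=\prod_{e\in A}w(e)$. $\mu_w(G,x)=\sum_{M}(-1)^{|M|}|w(M)|^2x^{n-2|M|}$ over all matchings $M$ (including empty). $\eta_{(w,w_1)}(G,x)=\sum_{S\subseteq V(G)}(-1)^{|V(G)\setminus S|}\big(\prod_{y\in V(G)\setminus S}w_1(y)\big)\mu_w(G[S],x)$ with $G[S]$ the induced subgraph; $\mu_w,\eta_{(w,w_1)}$ of the empty graph equal $1$. $\mathrm{mult}(\theta,H)$ is the multiplicity of $\theta$ as a root of $\eta_{(w,w_1)}(H,x)$ ($0$ if not a root). A vertex $v$ of $H$ is $(\theta,w,w_1)$-essential if $\mathrm{mult}(\theta,H\setminus v)=\mathrm{mult}(\theta,H)-1$ and $(\theta,w,w_1)$-positive if $\mathrm{mult}(\theta,H\setminus v)=\mathrm{mult}(\theta,H)+1$; $v$ is $(\theta,w,w_1)$-special if it is not essential but is adjacent to some essential vertex. *)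

theory Defs
  imports Complex_Main "HOL-Computational_Algebra.Polynomial"
begin

definition simple_graph :: "'a set \<Rightarrow> 'a set set \<Rightarrow> bool" where
  "simple_graph V E \<longleftrightarrow> finite V \<and> (\<forall>e\<in>E. \<exists>a b. a \<noteq> b \<and> a \<in> V \<and> b \<in> V \<and> e = {a, b})"

definition matchings :: "'a set set \<Rightarrow> 'a set set set" where
  "matchings E = {M. M \<subseteq> E \<and> (\<forall>e\<in>M. \<forall>f\<in>M. e \<noteq> f \<longrightarrow> e \<inter> f = {})}"

definition induced_edges :: "'a set set \<Rightarrow> 'a set \<Rightarrow> 'a set set" where
  "induced_edges E S = {e \<in> E. e \<subseteq> S}"

definition mu_poly :: "'a set \<Rightarrow> 'a set set \<Rightarrow> ('a set \<Rightarrow> complex) \<Rightarrow> real poly" where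
  "mu_poly V E w = (\<Sum>M\<in>matchings E.
      smult ((-1) ^ card M * (cmod (\<Prod>e\<in>M. w e))\<^sup>2) (monom 1 (card V - 2 * card M)))"

definition eta_poly :: "'a set \<Rightarrow> 'a set set \<Rightarrow> ('a set \<Rightarrow> complex) \<Rightarrow> ('a \<Rightarrow> real) \<Rightarrow> real poly" where
  "eta_poly V E w w1 = (\<Sum>S\<in>Pow V.
      smult ((-1) ^ card (V - S) * (\<Prod>y\<in>V - S. w1 y)) (mu_poly S (induced_edges E S) w))"

definition mult :: "real \<Rightarrow> 'a set \<Rightarrow> 'a set set \<Rightarrow> ('a set \<Rightarrow> complex) \<Rightarrow> ('a \<Rightarrow> real) \<Rightarrow> nat" where
  "mult \<theta> V E w w1 = order \<theta> (eta_poly V E w w1)"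

definition del_edges :: "'a set set \<Rightarrow> 'a \<Rightarrow> 'a set set" where
  "del_edges E v = {e \<in> E. v \<notin> e}"

definition essential :: "real \<Rightarrow> 'a set \<Rightarrow> 'a set set \<Rightarrow> ('a set \<Rightarrow> complex) \<Rightarrow> ('a \<Rightarrow> real) \<Rightarrow> 'a \<Rightarrow> bool" where
  "essential \<theta> V E w w1 v \<longleftrightarrow> v \<in> V \<and>
     int (mult \<theta> (V - {v}) (del_edges E v) w w1) = int (mult \<theta> V E w w1) - 1"

definition positive :: "real \<Rightarrow> 'a set \<Rightarrow> 'a set set \<Rightarrow> ('a set \<Rightarrow> complex) \<Rightarrow> ('a \<Rightarrow> real) \<Rightarrow> 'a \<Rightarrow> bool" where
  "positive \<theta> V E w w1 v \<longleftrightarrow> v \<in> V \<and>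
     mult \<theta> (V - {v}) (del_edges E v) w w1 = mult \<theta> V E w w1 + 1"

definition special :: "real \<Rightarrow> 'a set \<Rightarrow> 'a set set \<Rightarrow> ('a set \<Rightarrow> complex) \<Rightarrow> ('a \<Rightarrow> real) \<Rightarrow> 'a \<Rightarrow> bool" where
  "special \<theta> V E w w1 u \<longleftrightarrow> u \<in> V \<and> \<not> essential \<theta> V E w w1 u \<and>
     (\<exists>v. {u, v} \<in> E \<and> essential \<theta> V E w w1 v)"

end

theory Submission
  imports Defs
begin

(* Expanding eta over matchings shows that eta(G) is monic, satisfies the vertex recurrence
     eta(G) = (x - w1 u) eta(G - u) - sum over z ~ u of |w(uz)|^2 eta(G - u - z),
   and has derivative the sum of eta(G - z) over all vertices z.  Unfolding the recurrence at u
   writes the Heilmann-Lieb difference eta(G - u) eta(G - v) - eta(G) eta(G - u - v) as a sum of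
   polynomials (x - theta)^(2k) r with r(theta) > 0.  Such sums cannot cancel at theta: their order
   there is even and at most that of any summand, which for an edge uv is 2 mult(theta, G - u - v).
   The Wronskian eta(G - u) eta(G)' - eta(G) eta(G - u)' is eta(G - u)^2 plus such differences,
   which gives interlacing: deleting a vertex changes mult(theta) by at most one.  Finally, if v is
   essential and mult(G - u) = mult(G) = m, then eta(G - u) eta(G - v) has odd order 2m - 1 while
   eta(G) eta(G - u - v) has order at least m + mult(G - u - v), so the difference would have odd
   order or order above its bound; hence a special vertex raises the multiplicity. *)

section \<open>Polynomials of even order and positive cofactor at a point\<close>

definition even_pos_at :: "real \<Rightarrow> real poly \<Rightarrow> bool" where
  "even_pos_at t p \<longleftrightarrow> p = 0 \<or> (\<exists>k r. p = [:-t, 1:] ^ (2 * k) * r \<and> poly r t > 0)"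

lemma even_pos_at_0 [simp]: "even_pos_at t 0"
  by (simp add: even_pos_at_def)

lemma order_power_mult_nonroot:
  assumes "poly r t \<noteq> 0"
  shows "order t ([:-t, 1:] ^ n * r) = n"
proof -
  have "r \<noteq> 0" using assms by auto
  then show ?thesis using assms by (simp add: order_mult order_power_n_n order_0I)
qed

lemma order_even_pos_at:
  assumes "even_pos_at t p" "p \<noteq> 0"
  shows "even (order t p)"
  using assms by (auto simp: even_pos_at_def order_power_mult_nonroot)

lemma add_power_mult_pos:
  fixes r s :: "real poly"
  assumes "poly r t > 0" "poly s t > 0"
  obtains c where "[:-t, 1:] ^ (2 * k) * r + [:-t, 1:] ^ (2 * l) * s = [:-t, 1:] ^ (2 * min k l) * c"
    and "poly c t > 0"
proof
  define m where "m = min k l"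
  show "[:-t, 1:] ^ (2 * k) * r + [:-t, 1:] ^ (2 * l) * s
      = [:-t, 1:] ^ (2 * m) * ([:-t, 1:] ^ (2 * (k - m)) * r + [:-t, 1:] ^ (2 * (l - m)) * s)"
    by (simp add: m_def algebra_simps flip: power_add)
  show "poly ([:-t, 1:] ^ (2 * (k - m)) * r + [:-t, 1:] ^ (2 * (l - m)) * s) t > 0"
    using assms unfolding m_def
    by (cases "k \<le> l") (auto simp: power_0_left)
qed

lemma even_pos_at_add:
  assumes "even_pos_at t p" "even_pos_at t q"
  shows "even_pos_at t (p + q)"
  using assms unfolding even_pos_at_def by (metis add_0 add_0_right add_power_mult_pos)

lemma even_pos_at_add_order_le:
  assumes "even_pos_at t p" "even_pos_at t q" "q \<noteq> 0"
  shows "p + q \<noteq> 0" and "order t (p + q) \<le> order t q"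
proof -
  have "p + q \<noteq> 0 \<and> order t (p + q) \<le> order t q"
  proof (cases "p = 0")
    case False
    with assms obtain k r l s where p: "p = [:-t, 1:] ^ (2 * k) * r" "poly r t > 0"
      and q: "q = [:-t, 1:] ^ (2 * l) * s" "poly s t > 0"
      unfolding even_pos_at_def by blast
    obtain c where c: "p + q = [:-t, 1:] ^ (2 * min k l) * c" "poly c t > 0"
      using add_power_mult_pos[OF p(2) q(2)] p(1) q(1) by metis
    then have "p + q \<noteq> 0" by auto
    moreover have "order t (p + q) = 2 * min k l" "order t q = 2 * l"
      using c p q order_power_mult_nonroot by (metis less_irrefl)+
    ultimately show ?thesis by simp
  qed (use assms in simp)
  then show "p + q \<noteq> 0" and "order t (p + q) \<le> order t q" by auto
qed

lemma even_pos_at_smult: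
  assumes "even_pos_at t p" "c \<ge> 0"
  shows "even_pos_at t (smult c p)"
proof (cases "c = 0")
  case False
  then show ?thesis using assms unfolding even_pos_at_def
    by (auto intro!: exI[of _ "smult c r" for r])
qed simp

lemma even_pos_at_sum: "(\<And>i. i \<in> A \<Longrightarrow> even_pos_at t (f i)) \<Longrightarrow> even_pos_at t (sum f A)"
  by (induction A rule: infinite_finite_induct) (auto intro: even_pos_at_add)

lemma even_pos_at_power2: "even_pos_at t (q ^ 2)"
proof (cases "q = 0")
  case False
  obtain s where s: "q = [:-t, 1:] ^ order t q * s" "\<not> [:-t, 1:] dvd s"
    using order_decomp[OF False] by blast
  have "poly (s ^ 2) t > 0"
    using s(2) poly_eq_0_iff_dvd by fastforce
  moreover have "q ^ 2 = [:-t, 1:] ^ (2 * order t q) * s ^ 2"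
    by (subst s(1)) (simp add: power_mult_distrib mult.commute flip: power_mult)
  ultimately show ?thesis unfolding even_pos_at_def by blast
qed (simp add: even_pos_at_def)

lemma order_add_ge_min:
  fixes p q :: "'a::idom poly"
  assumes "p + q \<noteq> 0"
  shows "min (order t p) (order t q) \<le> order t (p + q)"
proof -
  have "[:-t, 1:] ^ min (order t p) (order t q) dvd p + q"
    by (intro dvd_add; rule dvd_trans[OF le_imp_power_dvd order_1]) simp_all
  then show ?thesis using assms by (simp add: order_divides)
qed

lemma order_add_eq_left:
  fixes p q :: "'a::idom poly"
  assumes "p \<noteq> 0" "order t p < order t q"
  shows "order t (p + q) = order t p"
proof -
  have "p + q \<noteq> 0"
    using assms by (metis add_eq_0_iff order_uminus less_irrefl)
  moreover have "order t p \<le> order t (p + q)"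
    using order_add_ge_min[OF calculation, of t] assms(2) by simp
  moreover have "min (order t (p + q)) (order t (- q)) \<le> order t p"
    using order_add_ge_min[of "p + q" "- q" t] assms(1) by simp
  ultimately show ?thesis using assms(2) by simp
qed

lemma power_order_minus_1_dvd_pderiv:
  fixes p :: "'a::field_char_0 poly"
  shows "[:-t, 1:] ^ (order t p - 1) dvd pderiv p"
proof (cases "p = 0 \<or> poly p t \<noteq> 0")
  case True
  then show ?thesis by (auto simp: order_0I)
next
  case False
  then show ?thesis by (simp add: order_pderiv order_1)
qed

section \<open>The matching expansion of \<open>\<eta>\<close>\<close>

definition all_doubletons :: "'a set set \<Rightarrow> bool" where
  "all_doubletons E \<longleftrightarrow> (\<forall>e\<in>E. \<exists>a b. a \<noteq> b \<and> e = {a, b})"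

definition matching_weight :: "('a set \<Rightarrow> complex) \<Rightarrow> 'a set set \<Rightarrow> real" where
  "matching_weight w M = (-1) ^ card M * (cmod (\<Prod>e\<in>M. w e))\<^sup>2"

definition eta_matchings ::
    "'a set \<Rightarrow> 'a set set \<Rightarrow> ('a set \<Rightarrow> complex) \<Rightarrow> ('a \<Rightarrow> real) \<Rightarrow> real poly" where
  "eta_matchings V E w w1 =
     (\<Sum>M\<in>matchings E. smult (matching_weight w M) (\<Prod>y\<in>V - \<Union>M. [:-w1 y, 1:]))"

lemma finite_edges: "finite V \<Longrightarrow> \<forall>e\<in>E. e \<subseteq> V \<Longrightarrow> finite E"
  by (metis Pow_iff finite_Pow_iff finite_subset subsetI)

lemma smult_sum_right: "smult c (sum f A) = (\<Sum>x\<in>A. smult c (f x))"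
  by (induction A rule: infinite_finite_induct) (auto simp: smult_add_right)

lemma all_doubletons_neq: "all_doubletons E \<Longrightarrow> {u, z} \<in> E \<Longrightarrow> u \<noteq> z"
  unfolding all_doubletons_def by (metis doubleton_eq_iff insert_absorb2)

lemma finite_matchings: "finite E \<Longrightarrow> finite (matchings E)"
  unfolding matchings_def by (rule finite_subset[of _ "Pow E"]) auto

lemma matchings_induced_edges: "matchings (induced_edges E S) = {M \<in> matchings E. \<Union>M \<subseteq> S}"
  unfolding matchings_def induced_edges_def by auto

lemma matchings_del_edges: "matchings (del_edges E u) = {M \<in> matchings E. u \<notin> \<Union>M}"
  unfolding matchings_def del_edges_def by auto

lemma card_Union_matching:
  assumes "all_doubletons E" "finite E" "M \<in> matchings E"
  shows "card (\<Union>M) = 2 * card M"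
proof -
  have M: "M \<subseteq> E" "\<And>e f. e \<in> M \<Longrightarrow> f \<in> M \<Longrightarrow> e \<noteq> f \<Longrightarrow> e \<inter> f = {}"
    using assms(3) unfolding matchings_def by auto
  have card2: "\<And>e. e \<in> M \<Longrightarrow> card e = 2"
    using M(1) assms(1) unfolding all_doubletons_def by fastforce
  have "card (\<Union>M) = sum card M"
    by (rule card_Union_disjoint)
      (use M card2 in \<open>auto simp: pairwise_def disjnt_def intro: card_ge_0_finite\<close>)
  then show ?thesis using card2 by simp
qed

lemma prod_linear_factors_expand:
  fixes a :: "'a \<Rightarrow> real"
  assumes "finite A"
  shows "(\<Prod>y\<in>A. [:-a y, 1:]) =
    (\<Sum>T\<in>Pow A. smult ((-1) ^ card (A - T) * (\<Prod>y\<in>A - T. a y)) (monom 1 (card T)))"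
proof -
  have const: "(\<Prod>y\<in>B. [:f y:]) = [:\<Prod>y\<in>B. f y:]" for B and f :: "'a \<Rightarrow> real"
    by (induction B rule: infinite_finite_induct) auto
  have "(\<Prod>y\<in>A. [:-a y, 1:]) = (\<Prod>y\<in>A. monom 1 1 + [:-a y:])"
    by (intro prod.cong refl) (simp add: monom_Suc one_pCons)
  also have "\<dots> = (\<Sum>T\<in>Pow A. (\<Prod>y\<in>T. monom 1 1) * (\<Prod>y\<in>A - T. [:-a y:]))"
    by (rule prod_add[OF assms])
  also have "\<dots> = (\<Sum>T\<in>Pow A. smult ((-1) ^ card (A - T) * (\<Prod>y\<in>A - T. a y)) (monom 1 (card T)))"
    by (simp add: const monom_power prod_uminus)
  finally show ?thesis .
qed

lemma sum_supersets_monom: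
  fixes a :: "'a \<Rightarrow> real"
  assumes "finite V" "U \<subseteq> V"
  shows "(\<Sum>S | S \<subseteq> V \<and> U \<subseteq> S.
            smult ((-1) ^ card (V - S) * (\<Prod>y\<in>V - S. a y)) (monom 1 (card S - card U)))
       = (\<Prod>y\<in>V - U. [:-a y, 1:])"
proof -
  have "finite U" using assms finite_subset by blast
  have supersets: "{S. S \<subseteq> V \<and> U \<subseteq> S} = (\<union>) U ` Pow (V - U)"
    using assms(2) by (auto intro!: image_eqI[of _ _ "S - U" for S])
  have "inj_on ((\<union>) U) (Pow (V - U))"
    by (rule inj_onI) auto
  then have "(\<Sum>S | S \<subseteq> V \<and> U \<subseteq> S.
            smult ((-1) ^ card (V - S) * (\<Prod>y\<in>V - S. a y)) (monom 1 (card S - card U)))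
     = (\<Sum>T\<in>Pow (V - U). smult ((-1) ^ card (V - (U \<union> T)) * (\<Prod>y\<in>V - (U \<union> T). a y))
          (monom 1 (card (U \<union> T) - card U)))"
    unfolding supersets by (simp add: sum.reindex)
  also have "\<dots> = (\<Sum>T\<in>Pow (V - U).
      smult ((-1) ^ card ((V - U) - T) * (\<Prod>y\<in>(V - U) - T. a y)) (monom 1 (card T)))"
  proof (rule sum.cong[OF refl])
    fix T assume "T \<in> Pow (V - U)"
    then have "V - (U \<union> T) = (V - U) - T" "card (U \<union> T) = card U + card T"
      using \<open>finite U\<close> assms(1) by (auto intro!: card_Un_disjoint intro: finite_subset)
    then show "smult ((-1) ^ card (V - (U \<union> T)) * (\<Prod>y\<in>V - (U \<union> T). a y))
        (monom 1 (card (U \<union> T) - card U))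
      = smult ((-1) ^ card ((V - U) - T) * (\<Prod>y\<in>(V - U) - T. a y)) (monom 1 (card T))"
      by simp
  qed
  also have "\<dots> = (\<Prod>y\<in>V - U. [:-a y, 1:])"
    using assms(1) by (simp add: prod_linear_factors_expand)
  finally show ?thesis .
qed

lemma eta_poly_eq_eta_matchings:
  assumes "finite V" "all_doubletons E" "\<forall>e\<in>E. e \<subseteq> V"
  shows "eta_poly V E w w1 = eta_matchings V E w w1"
proof -
  have "finite E" using assms(1,3) by (rule finite_edges)
  then have "finite (matchings E)" by (rule finite_matchings)
  have "eta_poly V E w w1 = (\<Sum>S\<in>Pow V. \<Sum>M | M \<in> matchings E \<and> \<Union>M \<subseteq> S.
      smult ((-1) ^ card (V - S) * (\<Prod>y\<in>V - S. w1 y))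
        (smult (matching_weight w M) (monom 1 (card S - 2 * card M))))"
    unfolding eta_poly_def mu_poly_def matchings_induced_edges matching_weight_def smult_sum_right
    by simp
  also have "\<dots> = (\<Sum>M\<in>matchings E. \<Sum>S | S \<subseteq> V \<and> \<Union>M \<subseteq> S.
      smult ((-1) ^ card (V - S) * (\<Prod>y\<in>V - S. w1 y))
        (smult (matching_weight w M) (monom 1 (card S - 2 * card M))))"
    using assms(1) \<open>finite (matchings E)\<close> by (subst sum.swap_restrict) auto
  also have "\<dots> = eta_matchings V E w w1"
    unfolding eta_matchings_def
  proof (rule sum.cong[OF refl])
    fix M assume M: "M \<in> matchings E"
    have "\<Union>M \<subseteq> V" using M assms(3) unfolding matchings_def by auto
    moreover have "2 * card M = card (\<Union>M)"
      using card_Union_matching[OF assms(2) \<open>finite E\<close> M] by simp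
    ultimately show "(\<Sum>S | S \<subseteq> V \<and> \<Union>M \<subseteq> S.
        smult ((-1) ^ card (V - S) * (\<Prod>y\<in>V - S. w1 y))
          (smult (matching_weight w M) (monom 1 (card S - 2 * card M))))
      = smult (matching_weight w M) (\<Prod>y\<in>V - \<Union>M. [:-w1 y, 1:])"
      using assms(1) by (simp add: sum_supersets_monom[symmetric] smult_sum_right mult.commute)
  qed
  finally show ?thesis .
qed

lemma pderiv_sum: "pderiv (sum f A) = (\<Sum>x\<in>A. pderiv (f x))"
  by (induction A rule: infinite_finite_induct) (auto simp: pderiv_add)

lemma inj_on_insert_edge:
  "inj_on (\<lambda>(z, M). insert {u, z} M) {(z, M). \<forall>e\<in>M. u \<notin> e}"
proof (rule inj_onI, clarsimp)
  fix z M z' M' assume avoid: "\<forall>e\<in>M. u \<notin> e" "\<forall>e\<in>M'. u \<notin> e"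
    and eq: "insert {u, z} M = insert {u, z'} M'"
  have "{u, z} \<in> insert {u, z'} M'" unfolding eq[symmetric] by simp
  then have "z = z'" using avoid(2) by (auto simp: doubleton_eq_iff)
  moreover have "{u, z} \<notin> M" "{u, z} \<notin> M'" using avoid by auto
  ultimately show "z = z' \<and> M = M'" using eq insert_ident by metis
qed

lemma bij_betw_insert_edge_matchings:
  assumes "all_doubletons E"
  shows "bij_betw (\<lambda>(z, M). insert {u, z} M)
    (SIGMA z:{z. {u, z} \<in> E}. matchings (del_edges (del_edges E u) z))
    {M \<in> matchings E. u \<in> \<Union>M}"
    (is "bij_betw ?h ?Sig _")
proof (rule bij_betw_imageI)
  have Sig_avoid: "\<forall>e\<in>M. u \<notin> e \<and> z \<notin> e \<and> e \<in> E" "M \<in> matchings E" "{u, z} \<in> E"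
    if "(z, M) \<in> ?Sig" for z M
    using that unfolding matchings_def del_edges_def by auto
  show "inj_on ?h ?Sig"
    by (rule inj_on_subset[OF inj_on_insert_edge]) (auto simp: matchings_def del_edges_def)
  show "?h ` ?Sig = {M \<in> matchings E. u \<in> \<Union>M}"
  proof
    show "?h ` ?Sig \<subseteq> {M \<in> matchings E. u \<in> \<Union>M}"
    proof
      fix M assume "M \<in> ?h ` ?Sig"
      then obtain z M' where zM': "(z, M') \<in> ?Sig" "M = insert {u, z} M'" by auto
      with Sig_avoid[OF zM'(1)] have "M \<in> matchings E"
        unfolding zM'(2) matchings_def by auto
      then show "M \<in> {M \<in> matchings E. u \<in> \<Union>M}" using zM'(2) by simp
    qed
    show "{M \<in> matchings E. u \<in> \<Union>M} \<subseteq> ?h ` ?Sig"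
    proof clarify
      fix M e assume M: "M \<in> matchings E" and e: "u \<in> e" "e \<in> M"
      then have "e \<in> E" unfolding matchings_def by auto
      moreover obtain a b where "e = {a, b}"
        using assms \<open>e \<in> E\<close> unfolding all_doubletons_def by blast
      ultimately obtain z where z: "e = {u, z}"
        using e(1) by (cases "u = a") (auto simp: insert_commute)
      have "f \<inter> e = {}" if "f \<in> M - {e}" for f
        using M e(2) that unfolding matchings_def by blast
      then have "M - {e} \<in> matchings (del_edges (del_edges E u) z)"
        using M z unfolding matchings_def del_edges_def by auto
      then have "(z, M - {e}) \<in> ?Sig" using \<open>e \<in> E\<close> z by auto
      moreover have "M = ?h (z, M - {e})" using e z by auto
      ultimately show "M \<in> ?h ` ?Sig" by blast
    qed
  qed
qed

lemma sum_matchings_covering: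
  assumes "all_doubletons E" "finite E"
  shows "(\<Sum>M | M \<in> matchings E \<and> u \<in> \<Union>M. f M) =
    (\<Sum>z | {u, z} \<in> E. \<Sum>M\<in>matchings (del_edges (del_edges E u) z). f (insert {u, z} M))"
proof -
  have "finite (\<Union>E)"
    using assms unfolding all_doubletons_def by auto
  then have "finite {z. {u, z} \<in> E}"
    by (rule finite_subset[rotated]) auto
  have "(\<Sum>M | M \<in> matchings E \<and> u \<in> \<Union>M. f M) =
    (\<Sum>(z, M) \<in> (SIGMA z:{z. {u, z} \<in> E}. matchings (del_edges (del_edges E u) z)).
      f (insert {u, z} M))"
    using sum.reindex_bij_betw[OF bij_betw_insert_edge_matchings[OF assms(1)], of f]
    by (simp add: split_def)
  also have "\<dots> = (\<Sum>z | {u, z} \<in> E. \<Sum>M\<in>matchings (del_edges (del_edges E u) z). f (insert {u, z} M))"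
    using \<open>finite {z. {u, z} \<in> E}\<close> assms(2)
    by (subst sum.Sigma) (auto intro: finite_matchings simp: del_edges_def)
  finally show ?thesis .
qed

lemma eta_matchings_rec:
  assumes "finite V" "all_doubletons E" "\<forall>e\<in>E. e \<subseteq> V" "u \<in> V"
  shows "eta_matchings V E w w1 = [:-w1 u, 1:] * eta_matchings (V - {u}) (del_edges E u) w w1
     - (\<Sum>z | {u, z} \<in> E. smult ((cmod (w {u, z}))\<^sup>2)
          (eta_matchings (V - {u} - {z}) (del_edges (del_edges E u) z) w w1))"
proof -
  have "finite E" using assms(1,3) by (rule finite_edges)
  define f where "f M = smult (matching_weight w M) (\<Prod>y\<in>V - \<Union>M. [:-w1 y, 1:])" for M
  have "matchings E = {M \<in> matchings E. u \<notin> \<Union>M} \<union> {M \<in> matchings E. u \<in> \<Union>M}" by auto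
  then have "eta_matchings V E w w1 =
      (\<Sum>M | M \<in> matchings E \<and> u \<notin> \<Union>M. f M) + (\<Sum>M | M \<in> matchings E \<and> u \<in> \<Union>M. f M)"
    unfolding eta_matchings_def f_def[symmetric] using finite_matchings[OF \<open>finite E\<close>]
    by (metis (no_types, lifting) sum.union_disjoint finite_Un disjoint_iff mem_Collect_eq)
  also have "(\<Sum>M | M \<in> matchings E \<and> u \<notin> \<Union>M. f M)
      = [:-w1 u, 1:] * eta_matchings (V - {u}) (del_edges E u) w w1"
    unfolding eta_matchings_def matchings_del_edges sum_distrib_left
  proof (rule sum.cong[OF refl])
    fix M assume "M \<in> {M \<in> matchings E. u \<notin> \<Union>M}"
    then have "V - \<Union>M = insert u (V - {u} - \<Union>M)" using assms(4) by auto
    then show "f M = [:-w1 u, 1:] * smult (matching_weight w M) (\<Prod>y\<in>V - {u} - \<Union>M. [:-w1 y, 1:])"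
      unfolding f_def using assms(1) by (simp add: mult_smult_right)
  qed
  also have "(\<Sum>M | M \<in> matchings E \<and> u \<in> \<Union>M. f M)
      = - (\<Sum>z | {u, z} \<in> E. smult ((cmod (w {u, z}))\<^sup>2)
            (eta_matchings (V - {u} - {z}) (del_edges (del_edges E u) z) w w1))"
    unfolding sum_matchings_covering[OF assms(2) \<open>finite E\<close>] eta_matchings_def smult_sum_right
      sum_negf[symmetric]
  proof (intro sum.cong refl)
    fix z M assume "M \<in> matchings (del_edges (del_edges E u) z)"
    then have "{u, z} \<notin> M" "finite M"
      using \<open>finite E\<close> unfolding matchings_def del_edges_def by (auto intro: finite_subset)
    then have "matching_weight w (insert {u, z} M) = - ((cmod (w {u, z}))\<^sup>2 * matching_weight w M)"
      unfolding matching_weight_def by (simp add: norm_mult power_mult_distrib)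
    moreover have "V - \<Union>(insert {u, z} M) = V - {u} - {z} - \<Union>M" by auto
    ultimately show "f (insert {u, z} M) = - smult ((cmod (w {u, z}))\<^sup>2)
        (smult (matching_weight w M) (\<Prod>y\<in>V - {u} - {z} - \<Union>M. [:-w1 y, 1:]))"
      unfolding f_def by simp
  qed
  finally show ?thesis by simp
qed

lemma pderiv_eta_matchings:
  assumes "finite V" "\<forall>e\<in>E. e \<subseteq> V"
  shows "pderiv (eta_matchings V E w w1) = (\<Sum>z\<in>V. eta_matchings (V - {z}) (del_edges E z) w w1)"
proof -
  have "finite E" using assms by (rule finite_edges)
  have pderiv_term: "pderiv (smult c (\<Prod>y\<in>A. [:-w1 y, 1:])) =
      (\<Sum>z\<in>A. smult c (\<Prod>y\<in>A - {z}. [:-w1 y, 1:]))" for c A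
    by (simp add: pderiv_smult pderiv_prod pderiv_pCons smult_sum_right)
  have "pderiv (eta_matchings V E w w1) = (\<Sum>M\<in>matchings E. \<Sum>z | z \<in> V \<and> z \<notin> \<Union>M.
       smult (matching_weight w M) (\<Prod>y\<in>V - {z} - \<Union>M. [:-w1 y, 1:]))"
    unfolding eta_matchings_def pderiv_sum pderiv_term
  proof (intro sum.cong refl)
    fix M z
    show "V - \<Union>M = {z. z \<in> V \<and> z \<notin> \<Union>M}" by auto
    have "V - \<Union>M - {z} = V - {z} - \<Union>M" by auto
    then show "smult (matching_weight w M) (\<Prod>y\<in>V - \<Union>M - {z}. [:-w1 y, 1:]) =
        smult (matching_weight w M) (\<Prod>y\<in>V - {z} - \<Union>M. [:-w1 y, 1:])" by simp
  qed
  also have "\<dots> = (\<Sum>z\<in>V. \<Sum>M | M \<in> matchings E \<and> z \<notin> \<Union>M.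
       smult (matching_weight w M) (\<Prod>y\<in>V - {z} - \<Union>M. [:-w1 y, 1:]))"
    using assms(1) finite_matchings[OF \<open>finite E\<close>] by (subst sum.swap_restrict) auto
  also have "\<dots> = (\<Sum>z\<in>V. eta_matchings (V - {z}) (del_edges E z) w w1)"
    unfolding eta_matchings_def matchings_del_edges by simp
  finally show ?thesis .
qed

lemma degree_prod_linear_factors:
  fixes a :: "'a \<Rightarrow> real"
  assumes "finite A"
  shows "degree (\<Prod>y\<in>A. [:-a y, 1:]) = card A" and "lead_coeff (\<Prod>y\<in>A. [:-a y, 1:]) = 1"
proof -
  show "degree (\<Prod>y\<in>A. [:-a y, 1:]) = card A"
    by (subst degree_prod_eq_sum_degree) auto
  show "lead_coeff (\<Prod>y\<in>A. [:-a y, 1:]) = 1"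
    by (simp add: lead_coeff_prod)
qed

lemma coeff_eta_matchings_card:
  assumes "finite V" "all_doubletons E" "\<forall>e\<in>E. e \<subseteq> V"
  shows "coeff (eta_matchings V E w w1) (card V) = 1"
proof -
  have "finite E" using assms(1,3) by (rule finite_edges)
  have "{} \<in> matchings E" unfolding matchings_def by auto
  have "coeff (smult (matching_weight w M) (\<Prod>y\<in>V - \<Union>M. [:-w1 y, 1:])) (card V) = 0"
    if M: "M \<in> matchings E - {{}}" for M
  proof -
    obtain e where "e \<in> M" "e \<in> E" using M unfolding matchings_def by auto
    then obtain a b where "{a, b} \<in> M" "a \<in> V"
      using assms(2,3) unfolding all_doubletons_def by fastforce
    then have "card (V - \<Union>M) < card V"
      using assms(1) by (intro psubset_card_mono) auto
    then show ?thesis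
      using assms(1) by (simp add: coeff_eq_0 degree_prod_linear_factors)
  qed
  then have "(\<Sum>M\<in>matchings E - {{}}.
      coeff (smult (matching_weight w M) (\<Prod>y\<in>V - \<Union>M. [:-w1 y, 1:])) (card V)) = 0"
    by (intro sum.neutral) blast
  then have "coeff (eta_matchings V E w w1) (card V)
      = coeff (smult (matching_weight w {}) (\<Prod>y\<in>V - \<Union>{}. [:-w1 y, 1:])) (card V)"
    unfolding eta_matchings_def coeff_sum
    by (subst sum.remove[OF finite_matchings[OF \<open>finite E\<close>] \<open>{} \<in> matchings E\<close>]) simp
  also have "\<dots> = 1"
    using degree_prod_linear_factors[OF assms(1)] by (simp add: matching_weight_def)
  finally show ?thesis .
qed

section \<open>The Heilmann--Lieb difference and interlacing\<close>

definition eta_induced :: "'a set set \<Rightarrow> ('a set \<Rightarrow> complex) \<Rightarrow> ('a \<Rightarrow> real) \<Rightarrow> 'a set \<Rightarrow> real poly" where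
  "eta_induced E w w1 S = eta_matchings S (induced_edges E S) w w1"

lemma all_doubletons_induced_edges: "all_doubletons E \<Longrightarrow> all_doubletons (induced_edges E S)"
  unfolding all_doubletons_def induced_edges_def by auto

lemma induced_edges_subset: "\<forall>e\<in>induced_edges E S. e \<subseteq> S"
  unfolding induced_edges_def by auto

lemma del_edges_induced_edges: "del_edges (induced_edges E S) u = induced_edges E (S - {u})"
  unfolding del_edges_def induced_edges_def by auto

lemma eta_induced_nonzero:
  assumes "finite S" "all_doubletons E"
  shows "eta_induced E w w1 S \<noteq> 0"
proof -
  have "coeff (eta_induced E w w1 S) (card S) = 1"
    unfolding eta_induced_def
    by (rule coeff_eta_matchings_card[OF assms(1) all_doubletons_induced_edges[OF assms(2)]
          induced_edges_subset])
  then show ?thesis by auto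
qed

lemma pderiv_eta_induced:
  "finite S \<Longrightarrow> pderiv (eta_induced E w w1 S) = (\<Sum>z\<in>S. eta_induced E w w1 (S - {z}))"
  unfolding eta_induced_def
  by (simp add: pderiv_eta_matchings induced_edges_subset del_edges_induced_edges)

lemma eta_induced_rec:
  assumes "finite S" "all_doubletons E" "u \<in> S"
  shows "eta_induced E w w1 S = [:-w1 u, 1:] * eta_induced E w w1 (S - {u})
     - (\<Sum>z | z \<in> S - {u} \<and> {u, z} \<in> E.
          smult ((cmod (w {u, z}))\<^sup>2) (eta_induced E w w1 (S - {u} - {z})))"
proof -
  have "{z. {u, z} \<in> induced_edges E S} = {z. z \<in> S - {u} \<and> {u, z} \<in> E}"
    using assms(3) by (auto simp: induced_edges_def dest: all_doubletons_neq[OF assms(2)])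
  then show ?thesis
    unfolding eta_induced_def
      eta_matchings_rec[OF assms(1) all_doubletons_induced_edges[OF assms(2)] induced_edges_subset assms(3)]
      del_edges_induced_edges
    by (simp only:)
qed

context
  fixes E :: "'a set set" and w :: "'a set \<Rightarrow> complex" and w1 :: "'a \<Rightarrow> real"
  assumes doubletons: "all_doubletons E"
begin

abbreviation \<eta> :: "'a set \<Rightarrow> real poly" where
  "\<eta> \<equiv> eta_induced E w w1"

definition heilmann_lieb_diff :: "'a set \<Rightarrow> 'a \<Rightarrow> 'a \<Rightarrow> real poly" where
  "heilmann_lieb_diff S u v = \<eta> (S - {u}) * \<eta> (S - {v}) - \<eta> S * \<eta> (S - {u} - {v})"

lemma eta_induced_rec_delete:
  assumes "finite S" "u \<in> S" "u \<noteq> v"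
  shows "\<eta> (S - {v}) = [:-w1 u, 1:] * \<eta> (S - {u} - {v})
     - (\<Sum>i \<in> {z \<in> S - {u}. {u, z} \<in> E} - {v}.
          smult ((cmod (w {u, i}))\<^sup>2) (\<eta> (S - {u} - {i} - {v})))"
proof -
  have "{z. z \<in> S - {v} - {u} \<and> {u, z} \<in> E} = {z \<in> S - {u}. {u, z} \<in> E} - {v}"
    "S - {v} - {u} = S - {u} - {v}" "\<And>i. S - {v} - {u} - {i} = S - {u} - {i} - {v}"
    by auto
  then show ?thesis
    using eta_induced_rec[OF _ doubletons, of "S - {v}" u w w1] assms by simp
qed

lemma heilmann_lieb_diff_rec:
  assumes "finite S" "u \<in> S" "v \<in> S" "u \<noteq> v"
  shows "heilmann_lieb_diff S u v =
      (if {u, v} \<in> E then smult ((cmod (w {u, v}))\<^sup>2) (\<eta> (S - {u} - {v}) ^ 2) else 0)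
     + (\<Sum>i \<in> {z \<in> S - {u}. {u, z} \<in> E} - {v}.
          smult ((cmod (w {u, i}))\<^sup>2) (heilmann_lieb_diff (S - {u}) i v))"
proof -
  define N where "N = {z \<in> S - {u}. {u, z} \<in> E}"
  define c where "c i = (cmod (w {u, i}))\<^sup>2" for i
  define A where "A = \<eta> (S - {u})"
  define B where "B = \<eta> (S - {u} - {v})"
  define s1 where "s1 = (\<Sum>i\<in>N. smult (c i) (\<eta> (S - {u} - {i})))"
  define s2 where "s2 = (\<Sum>i\<in>N - {v}. smult (c i) (\<eta> (S - {u} - {i} - {v})))"
  have "finite N" using assms(1) unfolding N_def by simp
  have rec_S: "\<eta> S = [:-w1 u, 1:] * A - s1"
    unfolding A_def s1_def N_def c_def by (rule eta_induced_rec[OF assms(1) doubletons assms(2)])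
  have rec_Sv: "\<eta> (S - {v}) = [:-w1 u, 1:] * B - s2"
    unfolding B_def s2_def c_def N_def by (rule eta_induced_rec_delete[OF assms(1,2,4)])
  have "heilmann_lieb_diff S u v = s1 * B - A * s2"
    unfolding heilmann_lieb_diff_def rec_S rec_Sv A_def[symmetric] B_def[symmetric]
    by (simp add: algebra_simps)
  also have "s1 * B = (\<Sum>i\<in>N. smult (c i) (\<eta> (S - {u} - {i}) * B))"
    unfolding s1_def sum_distrib_right by (simp add: mult_smult_left)
  also have "\<dots> = (if {u, v} \<in> E then smult (c v) (B ^ 2) else 0)
      + (\<Sum>i\<in>N - {v}. smult (c i) (\<eta> (S - {u} - {i}) * B))"
  proof (cases "{u, v} \<in> E")
    case True
    then have "v \<in> N" using assms unfolding N_def by auto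
    then show ?thesis using True \<open>finite N\<close> by (simp add: B_def sum.remove power2_eq_square)
  next
    case False
    then have "N - {v} = N" unfolding N_def by auto
    then show ?thesis using False by simp
  qed
  also have "A * s2 = (\<Sum>i\<in>N - {v}. smult (c i) (A * \<eta> (S - {u} - {i} - {v})))"
    unfolding s2_def sum_distrib_left by (simp add: mult_smult_right)
  finally have "heilmann_lieb_diff S u v = (if {u, v} \<in> E then smult (c v) (B ^ 2) else 0)
      + ((\<Sum>i\<in>N - {v}. smult (c i) (\<eta> (S - {u} - {i}) * B))
         - (\<Sum>i\<in>N - {v}. smult (c i) (A * \<eta> (S - {u} - {i} - {v}))))"
    by simp
  also have "(\<Sum>i\<in>N - {v}. smult (c i) (\<eta> (S - {u} - {i}) * B))
      - (\<Sum>i\<in>N - {v}. smult (c i) (A * \<eta> (S - {u} - {i} - {v})))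
     = (\<Sum>i\<in>N - {v}. smult (c i) (heilmann_lieb_diff (S - {u}) i v))"
    unfolding sum_subtractf[symmetric] heilmann_lieb_diff_def A_def B_def
    by (intro sum.cong refl) (simp add: smult_diff_right)
  finally show ?thesis unfolding B_def N_def c_def by simp
qed

lemma even_pos_at_heilmann_lieb_diff:
  assumes "finite S" "u \<in> S" "v \<in> S" "u \<noteq> v"
  shows "even_pos_at t (heilmann_lieb_diff S u v)"
  using assms
proof (induction "card S" arbitrary: S u v rule: less_induct)
  case less
  have "card (S - {u}) < card S" using less.prems by (meson card_Diff1_less)
  then have "even_pos_at t (\<Sum>i \<in> {z \<in> S - {u}. {u, z} \<in> E} - {v}.
      smult ((cmod (w {u, i}))\<^sup>2) (heilmann_lieb_diff (S - {u}) i v))"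
    using less by (intro even_pos_at_sum even_pos_at_smult less.hyps) auto
  moreover have "even_pos_at t
      (if {u, v} \<in> E then smult ((cmod (w {u, v}))\<^sup>2) (\<eta> (S - {u} - {v}) ^ 2) else 0)"
    by (auto intro: even_pos_at_smult even_pos_at_power2)
  ultimately show ?case
    unfolding heilmann_lieb_diff_rec[OF less.prems] by (rule even_pos_at_add[rotated])
qed

lemma heilmann_lieb_diff_edge:
  assumes "finite S" "u \<in> S" "v \<in> S" "{u, v} \<in> E" "w {u, v} \<noteq> 0"
  shows "heilmann_lieb_diff S u v \<noteq> 0"
    and "order t (heilmann_lieb_diff S u v) \<le> 2 * order t (\<eta> (S - {u} - {v}))"
proof -
  have "u \<noteq> v" using all_doubletons_neq[OF doubletons assms(4)] .
  define P where "P = smult ((cmod (w {u, v}))\<^sup>2) (\<eta> (S - {u} - {v}) ^ 2)"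
  define R where "R = (\<Sum>i \<in> {z \<in> S - {u}. {u, z} \<in> E} - {v}.
      smult ((cmod (w {u, i}))\<^sup>2) (heilmann_lieb_diff (S - {u}) i v))"
  have "\<eta> (S - {u} - {v}) \<noteq> 0" using eta_induced_nonzero[OF _ doubletons] assms(1) by simp
  then have "P \<noteq> 0" "order t P = 2 * order t (\<eta> (S - {u} - {v}))"
    using assms(5) unfolding P_def by (simp_all add: order_smult order_mult power2_eq_square)
  moreover have "even_pos_at t P" unfolding P_def by (simp add: even_pos_at_smult even_pos_at_power2)
  moreover have "even_pos_at t R"
    unfolding R_def using assms \<open>u \<noteq> v\<close>
    by (intro even_pos_at_sum even_pos_at_smult even_pos_at_heilmann_lieb_diff) auto
  moreover have "heilmann_lieb_diff S u v = R + P"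
    using heilmann_lieb_diff_rec[OF assms(1-3) \<open>u \<noteq> v\<close>] assms(4) unfolding P_def R_def by simp
  ultimately show "heilmann_lieb_diff S u v \<noteq> 0"
    and "order t (heilmann_lieb_diff S u v) \<le> 2 * order t (\<eta> (S - {u} - {v}))"
    using even_pos_at_add_order_le[of t R P] by auto
qed

lemma order_eta_induced_le_delete:
  assumes "finite S" "u \<in> S"
  shows "order t (\<eta> S) \<le> order t (\<eta> (S - {u})) + 1"
proof -
  define a where "a = order t (\<eta> (S - {u}))"
  define m where "m = order t (\<eta> S)"
  define W where "W = \<eta> (S - {u}) * pderiv (\<eta> S) - \<eta> S * pderiv (\<eta> (S - {u}))"
  have pderiv_S: "pderiv (\<eta> S) = \<eta> (S - {u}) + (\<Sum>z\<in>S - {u}. \<eta> (S - {z}))"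
    using assms by (simp add: pderiv_eta_induced sum.remove)
  have pderiv_Su: "pderiv (\<eta> (S - {u})) = (\<Sum>z\<in>S - {u}. \<eta> (S - {u} - {z}))"
    using assms by (simp add: pderiv_eta_induced)
  have W_eq: "W = (\<Sum>z\<in>S - {u}. heilmann_lieb_diff S u z) + \<eta> (S - {u}) ^ 2"
    unfolding W_def pderiv_S pderiv_Su heilmann_lieb_diff_def sum_subtractf sum_distrib_left
    by (simp add: algebra_simps power2_eq_square sum_distrib_left)
  have "\<eta> (S - {u}) \<noteq> 0" using eta_induced_nonzero[OF _ doubletons] assms(1) by simp
  moreover have "even_pos_at t (\<Sum>z\<in>S - {u}. heilmann_lieb_diff S u z)"
    using assms by (intro even_pos_at_sum even_pos_at_heilmann_lieb_diff) auto
  ultimately have "W \<noteq> 0" "order t W \<le> 2 * a"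
    using even_pos_at_add_order_le[OF _ even_pos_at_power2, of t _ "\<eta> (S - {u})"]
    unfolding W_eq a_def by (simp_all add: order_mult power2_eq_square mult_2)
  have "[:-t, 1:] ^ (a + (m - 1)) dvd \<eta> (S - {u}) * pderiv (\<eta> S)"
    "[:-t, 1:] ^ (m + (a - 1)) dvd \<eta> S * pderiv (\<eta> (S - {u}))"
    unfolding power_add a_def m_def
    by (intro mult_dvd_mono order_1 power_order_minus_1_dvd_pderiv)+
  moreover have "[:-t, 1:] ^ (a + m - 1) dvd [:-t, 1:] ^ (a + (m - 1))"
    "[:-t, 1:] ^ (a + m - 1) dvd [:-t, 1:] ^ (m + (a - 1))"
    by (intro le_imp_power_dvd; linarith)+
  ultimately have "[:-t, 1:] ^ (a + m - 1) dvd W"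
    unfolding W_def by (meson dvd_diff dvd_trans)
  with \<open>W \<noteq> 0\<close> \<open>order t W \<le> 2 * a\<close> have "a + m - 1 \<le> 2 * a" by (simp add: order_divides)
  then show ?thesis unfolding a_def m_def by linarith
qed

lemma order_eta_induced_delete_le:
  assumes "finite S" "u \<in> S"
  shows "order t (\<eta> (S - {u})) \<le> order t (\<eta> S) + 1"
proof -
  define a where "a = order t (\<eta> (S - {u}))"
  have "[:-t, 1:] ^ (a - 1) dvd \<eta> (S - {u} - {z})" if "z \<in> S - {u}" for z
    using order_eta_induced_le_delete[of "S - {u}" z] assms that eta_induced_nonzero[OF _ doubletons]
    unfolding a_def by (simp add: order_divides le_diff_conv)
  moreover have "[:-t, 1:] ^ (a - 1) dvd \<eta> (S - {u})"
    unfolding a_def by (rule dvd_trans[OF le_imp_power_dvd order_1]) simp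
  ultimately have "[:-t, 1:] ^ (a - 1) dvd \<eta> S"
    unfolding eta_induced_rec[OF assms(1) doubletons assms(2)]
    by (intro dvd_diff dvd_mult dvd_sum dvd_smult) auto
  then show ?thesis
    using eta_induced_nonzero[OF assms(1) doubletons] unfolding a_def by (simp add: order_divides)
qed

lemma order_eta_induced_delete_neighbour:
  assumes "finite S" "u \<in> S" "v \<in> S" "{u, v} \<in> E" "w {u, v} \<noteq> 0"
    and "order t (\<eta> (S - {v})) + 1 = order t (\<eta> S)"
  shows "order t (\<eta> (S - {u})) \<noteq> order t (\<eta> S)"
proof
  assume a: "order t (\<eta> (S - {u})) = order t (\<eta> S)"
  define m where "m = order t (\<eta> S)"
  define c where "c = order t (\<eta> (S - {u} - {v}))"
  define T1 where "T1 = \<eta> (S - {u}) * \<eta> (S - {v})"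
  define T2 where "T2 = \<eta> S * \<eta> (S - {u} - {v})"
  have D: "heilmann_lieb_diff S u v = T1 + - T2"
    unfolding heilmann_lieb_diff_def T1_def T2_def by simp
  have nonzero: "\<eta> S \<noteq> 0" "\<eta> (S - {u}) \<noteq> 0" "\<eta> (S - {v}) \<noteq> 0" "\<eta> (S - {u} - {v}) \<noteq> 0"
    using eta_induced_nonzero[OF _ doubletons] assms(1) by simp_all
  have "T1 \<noteq> 0" "order t T1 = 2 * m - 1" "m \<ge> 1"
    using assms(6) a nonzero unfolding T1_def m_def by (auto simp: order_mult)
  have "m + c \<le> order t (- T2)"
    using nonzero unfolding T2_def m_def c_def by (simp add: order_mult)
  have "heilmann_lieb_diff S u v \<noteq> 0" "order t (heilmann_lieb_diff S u v) \<le> 2 * c"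
    unfolding c_def using heilmann_lieb_diff_edge[OF assms(1-5)] by auto
  show False
  proof (cases "c < m")
    case True
    then show False
      using order_add_ge_min[of T1 "- T2" t] \<open>heilmann_lieb_diff S u v \<noteq> 0\<close>
        \<open>order t (heilmann_lieb_diff S u v) \<le> 2 * c\<close> \<open>order t T1 = 2 * m - 1\<close> \<open>m + c \<le> order t (- T2)\<close>
      unfolding D by linarith
  next
    case False
    then have "order t T1 < order t (- T2)"
      using \<open>order t T1 = 2 * m - 1\<close> \<open>m + c \<le> order t (- T2)\<close> \<open>m \<ge> 1\<close> by linarith
    then have "order t (T1 + - T2) = order t T1" by (rule order_add_eq_left[OF \<open>T1 \<noteq> 0\<close>])
    then have "order t (heilmann_lieb_diff S u v) = 2 * m - 1"
      using \<open>order t T1 = 2 * m - 1\<close> unfolding D by simp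
    moreover have "even (order t (heilmann_lieb_diff S u v))"
      using all_doubletons_neq[OF doubletons assms(4)] assms(1-3) \<open>heilmann_lieb_diff S u v \<noteq> 0\<close>
      by (intro order_even_pos_at even_pos_at_heilmann_lieb_diff)
    ultimately show False using \<open>m \<ge> 1\<close> by (cases m) simp_all
  qed
qed

end

lemma simple_graph_all_doubletons: "simple_graph V E \<Longrightarrow> all_doubletons E"
  unfolding simple_graph_def all_doubletons_def by metis

lemma simple_graph_edge_subset: "simple_graph V E \<Longrightarrow> e \<in> E \<Longrightarrow> e \<subseteq> V"
  unfolding simple_graph_def by force

lemma simple_graph_induced_edges: "simple_graph V E \<Longrightarrow> induced_edges E V = E"
  unfolding induced_edges_def by (auto dest: simple_graph_edge_subset)

lemma simple_graph_del_edges: "simple_graph V E \<Longrightarrow> del_edges E x = induced_edges E (V - {x})"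
  unfolding induced_edges_def del_edges_def by (auto dest: simple_graph_edge_subset)

lemma mult_induced_edges:
  "finite S \<Longrightarrow> all_doubletons E \<Longrightarrow>
    mult t S (induced_edges E S) w w1 = order t (eta_induced E w w1 S)"
  unfolding mult_def eta_induced_def
  by (simp add: eta_poly_eq_eta_matchings all_doubletons_induced_edges induced_edges_subset)

theorem lemma5p1:
  fixes V :: "'a set" and E :: "'a set set" and w :: "'a set \<Rightarrow> complex"
    and w1 :: "'a \<Rightarrow> real" and \<theta> :: real and u :: 'a
  assumes "simple_graph V E"
    and "\<forall>e\<in>E. w e \<noteq> 0"
    and "u \<in> V"
    and "special \<theta> V E w w1 u"
  shows "positive \<theta> V E w w1 u"
proof -
  have "finite V" using assms(1) unfolding simple_graph_def by simp
  have doubletons: "all_doubletons E" using assms(1) by (rule simple_graph_all_doubletons)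
  let ?m = "\<lambda>S. order \<theta> (eta_induced E w w1 S)"
  have mult_V: "mult \<theta> V E w w1 = ?m V"
    using mult_induced_edges[OF \<open>finite V\<close> doubletons] simple_graph_induced_edges[OF assms(1)]
    by metis
  have mult_del: "mult \<theta> (V - {x}) (del_edges E x) w w1 = ?m (V - {x})" for x
    using mult_induced_edges[OF _ doubletons] \<open>finite V\<close> simple_graph_del_edges[OF assms(1)] by simp
  obtain v where "{u, v} \<in> E" "essential \<theta> V E w w1 v" "\<not> essential \<theta> V E w w1 u"
    using assms(4) unfolding special_def by blast
  then have "v \<in> V" "?m (V - {v}) + 1 = ?m V" "?m (V - {u}) + 1 \<noteq> ?m V"
    using assms(3) unfolding essential_def mult_V mult_del by auto
  moreover have "?m V \<le> ?m (V - {u}) + 1" "?m (V - {u}) \<le> ?m V + 1"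
    using order_eta_induced_le_delete[OF doubletons \<open>finite V\<close> assms(3)]
      order_eta_induced_delete_le[OF doubletons \<open>finite V\<close> assms(3)] by simp_all
  moreover have "?m (V - {u}) \<noteq> ?m V"
    using order_eta_induced_delete_neighbour[OF doubletons \<open>finite V\<close> assms(3) \<open>v \<in> V\<close> \<open>{u, v} \<in> E\<close>]
      assms(2) \<open>{u, v} \<in> E\<close> \<open>?m (V - {v}) + 1 = ?m V\<close> by blast
  ultimately show ?thesis
    unfolding positive_def mult_V mult_del using assms(3) by linarith
qed

end
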